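(* In the setting below, suppose $n\ge 3$ and let $p,q\in X$ with $S_p\cup S_q=E$ and $|S_p\cap S_q|=n-1$. Let $\{e_a\}=S_p\setminus S_q$, $\{e_b\}=S_q\setminus S_p$, and write $p=\sum_{e_i\in S_p}\lambda_ie_i$, $q=\sum_{e_i\in S_q}\theta_ie_i$ (normalized by the convention). Then $\lambda_a>1$, $\theta_b>1$, and $\lambda_a\theta_b\ge\lambda_a+\theta_b$.
   Context: Setting: $E=\{e_0,\dots,e_n\}\subset\mathbb R^n$ is the vertex set of an $n$-simplex with $e_0+\cdots+e_n=0$, and $X\subset\mathbb R^n\setminus\{0\}$ is a finite set with $E\subseteq X$, no element of $X$ a positive multiple of another, such that every $n+1$ points of $X$ are in good position. (A finite set $A$ is in conical position if $0\notin\operatorname{conv}A$ and no point of $A$ lies in the positive hull—set of nonnegative linear combinations—of the other points; it is in good position otherwise.) For $p\in X$, the support $S_p$ is the minimal subset of $E$ whose positive hull contains $p$; then $p=\sum_{e_i\in S_p}\lambda_ie_i$ uniquely with all $\lambda_i>0$. Convention: each $p\in X$ is replaced by the positive multiple for which $\min_{e_i\in S_p}\lambda_i=1$. *)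

theory Defs
  imports "HOL-Analysis.Analysis"
begin

definition pos_hull :: "'a::real_vector set \<Rightarrow> 'a set" where
  "pos_hull A = {(\<Sum>a\<in>F. c a *\<^sub>R a) | F c. finite F \<and> F \<subseteq> A \<and> (\<forall>a\<in>F. 0 \<le> c a)}"

definition conical_position :: "'a::real_vector set \<Rightarrow> bool" where
  "conical_position A \<longleftrightarrow> 0 \<notin> convex hull A \<and> (\<forall>a\<in>A. a \<notin> pos_hull (A - {a}))"

definition good_position :: "'a::real_vector set \<Rightarrow> bool" where
  "good_position A \<longleftrightarrow> \<not> conical_position A"

definition is_support :: "(nat \<Rightarrow> 'a::real_vector) \<Rightarrow> nat set \<Rightarrow> nat set \<Rightarrow> 'a \<Rightarrow> bool" where
  "is_support e I S p \<longleftrightarrow> S \<subseteq> I \<and> p \<in> pos_hull (e ` S) \<and> (\<forall>T. T \<subset> S \<longrightarrow> p \<notin> pos_hull (e ` T))"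

end

(* The n + 1 points p, q and e k for the n - 1 shared indices k are in good position.
   The vertices are affinely independent and sum to zero, so every linear relation among
   them has constant coefficients.  Hence a relation among p, q and the shared vertices is
   determined by one scalar c, and the coefficient of e k is c (1 - lam k / lam a - theta k / theta b).
   If lam a + theta b > lam a * theta b, then 1 / lam a + 1 / theta b > 1, so, as lam k and
   theta k are at least 1, each of these brackets is negative; then every nonzero relation
   has two negative coefficients, i.e. the points are in conical position.  The strict
   bounds 1 < lam a and 1 < theta b follow from lam a + theta b <= lam a * theta b. *)

theory Submission
  imports Defs
begin

lemma conical_positionI:
  fixes A :: "'a::real_vector set"
  assumes "finite A"
    and only_trivial_relations:
      "\<And>w x. x \<in> A \<Longrightarrow> \<forall>y\<in>A - {x}. 0 \<le> w y \<Longrightarrow> (\<Sum>y\<in>A. w y *\<^sub>R y) = 0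
        \<Longrightarrow> \<forall>y\<in>A. w y = 0"
  shows "conical_position A"
  unfolding conical_position_def
proof (intro conjI ballI)
  show "0 \<notin> convex hull A"
  proof
    assume "0 \<in> convex hull A"
    then obtain u where u_nonneg: "\<forall>y\<in>A. 0 \<le> u y" and u_sum: "sum u A = 1"
      and u_rel: "(\<Sum>y\<in>A. u y *\<^sub>R y) = 0"
      using convex_hull_finite[OF \<open>finite A\<close>] by auto
    obtain x where "x \<in> A"
      using u_sum by fastforce
    then have "\<forall>y\<in>A. u y = 0"
      using only_trivial_relations u_nonneg u_rel by blast
    then show False
      using u_sum by simp
  qed
next
  fix x assume "x \<in> A"
  show "x \<notin> pos_hull (A - {x})"
  proof
    assume "x \<in> pos_hull (A - {x})"
    then obtain F c where "F \<subseteq> A - {x}" and c_nonneg: "\<forall>y\<in>F. 0 \<le> c y"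
      and x_eq: "x = (\<Sum>y\<in>F. c y *\<^sub>R y)"
      unfolding pos_hull_def by blast
    define w where "w y = (if y = x then -1 else if y \<in> F then c y else 0)" for y
    have "(\<Sum>y\<in>A - {x}. w y *\<^sub>R y) = (\<Sum>y\<in>A - {x}. if y \<in> F then c y *\<^sub>R y else 0)"
      by (rule sum.cong) (auto simp: w_def)
    also have "\<dots> = (\<Sum>y\<in>(A - {x}) \<inter> F. c y *\<^sub>R y)"
      using \<open>finite A\<close> by (simp add: sum.inter_restrict)
    also have "\<dots> = x"
      using \<open>F \<subseteq> A - {x}\<close> x_eq by (simp add: Int_absorb1)
    finally have "(\<Sum>y\<in>A. w y *\<^sub>R y) = 0"
      using \<open>finite A\<close> \<open>x \<in> A\<close> by (simp add: sum.remove w_def)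
    moreover have "\<forall>y\<in>A - {x}. 0 \<le> w y"
      using c_nonneg by (simp add: w_def)
    ultimately have "w x = 0"
      using only_trivial_relations \<open>x \<in> A\<close> by blast
    then show False
      by (simp add: w_def)
  qed
qed

locale centered_simplex =
  fixes e :: "'i \<Rightarrow> 'a::real_vector" and N :: "'i set"
  assumes finite_N: "finite N"
    and inj_e: "inj_on e N"
    and affine_independent: "\<not> affine_dependent (e ` N)"
    and sum_vertices: "(\<Sum>i\<in>N. e i) = 0"
begin

text \<open>Subtracting the mean of the coefficients turns a linear relation among the
  vertices into an affine one, which must be trivial.\<close>
lemma relation_coeffs_constant:
  assumes rel: "(\<Sum>i\<in>N. C i *\<^sub>R e i) = 0" and "i \<in> N" "j \<in> N"
  shows "C i = C j"
proof -
  define m where "m = (\<Sum>i\<in>N. C i) / card N"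
  define U where "U v = C (inv_into N e v) - m" for v
  have U_e: "U (e k) = C k - m" if "k \<in> N" for k
    using that inj_e by (simp add: U_def)
  have "card N \<noteq> 0"
    using \<open>i \<in> N\<close> finite_N by auto
  then have "sum U (e ` N) = 0"
    using inj_e U_e by (simp add: sum.reindex sum_subtractf m_def)
  moreover have "(\<Sum>v\<in>e ` N. U v *\<^sub>R v) = 0"
    using inj_e U_e rel sum_vertices
    by (simp add: sum.reindex scaleR_diff_left sum_subtractf flip: scaleR_sum_right)
  ultimately have "\<forall>v\<in>e ` N. U v = 0"
    using affine_independent
    unfolding affine_dependent_explicit_finite[OF finite_imageI[OF finite_N]] by blast
  then show ?thesis
    using U_e \<open>i \<in> N\<close> \<open>j \<in> N\<close> by force
qed

end

locale adjacent_supports = centered_simplex e N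
  for e :: "'i \<Rightarrow> 'a::real_vector" and N +
  fixes a b :: 'i and lam theta :: "'i \<Rightarrow> real" and p q :: 'a
  assumes a_in: "a \<in> N" and b_in: "b \<in> N" and a_neq_b: "a \<noteq> b"
    and lam_a_pos: "0 < lam a" and theta_b_pos: "0 < theta b"
    and p_eq: "p = (\<Sum>i\<in>N - {b}. lam i *\<^sub>R e i)"
    and q_eq: "q = (\<Sum>i\<in>N - {a}. theta i *\<^sub>R e i)"
begin

abbreviation shared_support :: "'i set" where
  "shared_support \<equiv> N - {a, b}"

lemma finite_shared_support: "finite shared_support"
  using finite_N by simp

lemma p_split: "p = lam a *\<^sub>R e a + (\<Sum>k\<in>shared_support. lam k *\<^sub>R e k)"
proof -
  have "N - {b} - {a} = shared_support"
    by auto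
  then show ?thesis
    using p_eq sum.remove[of "N - {b}" a "\<lambda>i. lam i *\<^sub>R e i"] finite_N a_in a_neq_b by simp
qed

lemma q_split: "q = theta b *\<^sub>R e b + (\<Sum>k\<in>shared_support. theta k *\<^sub>R e k)"
proof -
  have "N - {a} - {b} = shared_support"
    by auto
  then show ?thesis
    using q_eq sum.remove[of "N - {a}" b "\<lambda>i. theta i *\<^sub>R e i"] finite_N b_in a_neq_b by simp
qed

lemma relation_coeffs:
  assumes rel: "s *\<^sub>R p + t *\<^sub>R q + (\<Sum>k\<in>shared_support. u k *\<^sub>R e k) = 0"
  shows "t * theta b = s * lam a"
    and "k \<in> shared_support \<Longrightarrow> u k + s * lam k + t * theta k = s * lam a"
proof -
  define C where "C i = (if i = a then s * lam a else if i = b then t * theta b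
    else u i + s * lam i + t * theta i)" for i
  have "(\<Sum>i\<in>N. C i *\<^sub>R e i)
      = C a *\<^sub>R e a + C b *\<^sub>R e b + (\<Sum>k\<in>shared_support. C k *\<^sub>R e k)"
  proof -
    define S where "S = shared_support"
    have "N = insert a (insert b S)" "a \<notin> insert b S" "b \<notin> S" "finite S"
      using a_in b_in a_neq_b finite_shared_support by (auto simp: S_def)
    then show ?thesis
      by (simp add: add.assoc flip: S_def)
  qed
  also have "(\<Sum>k\<in>shared_support. C k *\<^sub>R e k)
      = (\<Sum>k\<in>shared_support. u k *\<^sub>R e k + s *\<^sub>R (lam k *\<^sub>R e k) + t *\<^sub>R (theta k *\<^sub>R e k))"
    by (rule sum.cong) (auto simp: C_def scaleR_add_left)
  also have "\<dots> = (\<Sum>k\<in>shared_support. u k *\<^sub>R e k) + s *\<^sub>R (\<Sum>k\<in>shared_support. lam k *\<^sub>R e k)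
      + t *\<^sub>R (\<Sum>k\<in>shared_support. theta k *\<^sub>R e k)"
    by (simp add: sum.distrib scaleR_sum_right)
  also have "C a *\<^sub>R e a + C b *\<^sub>R e b + \<dots> = s *\<^sub>R p + t *\<^sub>R q + (\<Sum>k\<in>shared_support. u k *\<^sub>R e k)"
    using a_neq_b by (simp add: p_split q_split C_def scaleR_add_right ac_simps)
  finally have "(\<Sum>i\<in>N. C i *\<^sub>R e i) = s *\<^sub>R p + t *\<^sub>R q + (\<Sum>k\<in>shared_support. u k *\<^sub>R e k)" .
  then have C_rel: "(\<Sum>i\<in>N. C i *\<^sub>R e i) = 0"
    using rel by simp
  show "t * theta b = s * lam a"
    using relation_coeffs_constant[OF C_rel b_in a_in] a_neq_b by (simp add: C_def)
  show "u k + s * lam k + t * theta k = s * lam a" if "k \<in> shared_support"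
    using relation_coeffs_constant[OF C_rel _ a_in, of k] that by (simp add: C_def)
qed

lemma p_neq_q: "p \<noteq> q"
proof
  assume "p = q"
  then have "1 *\<^sub>R p + (-1) *\<^sub>R q + (\<Sum>k\<in>shared_support. 0 *\<^sub>R e k) = 0"
    by simp
  then show False
    using relation_coeffs(1) lam_a_pos theta_b_pos by fastforce
qed

lemma sum_neg_delta_vertex: "k \<in> shared_support \<Longrightarrow>
    (\<Sum>j\<in>shared_support. (if j = k then -1 else 0) *\<^sub>R e j) = - e k"
proof -
  assume "k \<in> shared_support"
  have "(\<Sum>j\<in>shared_support. (if j = k then -1 else 0) *\<^sub>R e j)
      = (\<Sum>j\<in>shared_support. if j = k then - e j else 0)"
    by (rule sum.cong) auto
  then show ?thesis
    using \<open>k \<in> shared_support\<close> finite_shared_support by simp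
qed

lemma p_notin_vertices: "p \<notin> e ` shared_support"
proof
  assume "p \<in> e ` shared_support"
  then obtain k where "k \<in> shared_support" "p = e k"
    by blast
  then have "1 *\<^sub>R p + 0 *\<^sub>R q + (\<Sum>j\<in>shared_support. (if j = k then -1 else 0) *\<^sub>R e j) = 0"
    by (simp add: sum_neg_delta_vertex)
  then show False
    using relation_coeffs(1) lam_a_pos by fastforce
qed

lemma q_notin_vertices: "q \<notin> e ` shared_support"
proof
  assume "q \<in> e ` shared_support"
  then obtain k where "k \<in> shared_support" "q = e k"
    by blast
  then have "0 *\<^sub>R p + 1 *\<^sub>R q + (\<Sum>j\<in>shared_support. (if j = k then -1 else 0) *\<^sub>R e j) = 0"
    by (simp add: sum_neg_delta_vertex)
  then show False
    using relation_coeffs(1) theta_b_pos by fastforce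
qed

abbreviation adjacent_points :: "'a set" where
  "adjacent_points \<equiv> insert p (insert q (e ` shared_support))"

lemma inj_on_shared_support: "inj_on e shared_support"
  using inj_e by (rule inj_on_subset) auto

lemma sum_adjacent_points:
  "sum g adjacent_points = g p + g q + (\<Sum>k\<in>shared_support. g (e k))"
  using p_neq_q p_notin_vertices q_notin_vertices finite_shared_support inj_on_shared_support
  by (simp add: sum.reindex add.assoc)

lemma card_adjacent_points: "card adjacent_points = card N"
proof -
  have "card adjacent_points = card shared_support + 2"
    using p_neq_q p_notin_vertices q_notin_vertices finite_shared_support inj_on_shared_support
    by (simp add: card_image)
  moreover have "card shared_support = card N - 2"
    using a_in b_in a_neq_b finite_N by (simp add: card_Diff_subset)
  moreover have "2 \<le> card N"
    using card_mono[OF finite_N, of "{a, b}"] a_in b_in a_neq_b by simp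
  ultimately show ?thesis
    by simp
qed

text \<open>In a relation \<open>w\<close> among the adjacent points, with \<open>c = w p * lam a\<close>, the coefficient
  of \<open>q\<close> has the sign of \<open>c\<close> and that of a shared vertex \<open>e k\<close> the sign opposite to \<open>c\<close>.
  So \<open>c \<noteq> 0\<close> would force two negative coefficients, which conical position excludes.\<close>
lemma conical_adjacent_points:
  assumes two_shared: "2 \<le> card shared_support"
    and above_one: "\<forall>k\<in>shared_support. 1 < lam k / lam a + theta k / theta b"
  shows "conical_position adjacent_points"
proof (rule conical_positionI)
  show "finite adjacent_points"
    using finite_shared_support by simp
next
  fix w x
  assume "x \<in> adjacent_points" and nonneg: "\<forall>y\<in>adjacent_points - {x}. 0 \<le> w y"
    and rel: "(\<Sum>y\<in>adjacent_points. w y *\<^sub>R y) = 0"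
  have one_negative: False
    if "y \<in> adjacent_points" "z \<in> adjacent_points" "y \<noteq> z" "w y < 0" "w z < 0" for y z
  proof -
    have "y \<in> adjacent_points - {x} \<or> z \<in> adjacent_points - {x}"
      using that(1-3) by blast
    then have "0 \<le> w y \<or> 0 \<le> w z"
      using nonneg by blast
    then show False
      using that(4,5) by linarith
  qed
  have rel_split: "w p *\<^sub>R p + w q *\<^sub>R q + (\<Sum>k\<in>shared_support. w (e k) *\<^sub>R e k) = 0"
    using rel by (simp add: sum_adjacent_points)
  define c where "c = w p * lam a"
  have wp: "w p = c / lam a" and wq: "w q = c / theta b"
    using relation_coeffs(1)[OF rel_split] lam_a_pos theta_b_pos by (simp_all add: c_def field_simps)
  have we: "w (e k) = c * (1 - (lam k / lam a + theta k / theta b))" if "k \<in> shared_support" for k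
    using relation_coeffs(2)[OF rel_split that] lam_a_pos theta_b_pos
    by (simp add: wp wq field_simps)
  have "c = 0"
  proof (rule ccontr)
    assume "c \<noteq> 0"
    then consider (pos) "0 < c" | (neg) "c < 0"
      by linarith
    then show False
    proof cases
      case pos
      have "\<not> card shared_support \<le> Suc 0"
        using two_shared by simp
      then obtain k l where "k \<in> shared_support" "l \<in> shared_support" "k \<noteq> l"
        using card_le_Suc0_iff_eq[OF finite_shared_support] by blast
      moreover have "w (e j) < 0" if "j \<in> shared_support" for j
        using we[OF that] above_one that \<open>0 < c\<close> by (simp add: mult_pos_neg)
      moreover have "e k \<noteq> e l"
        using inj_on_shared_support \<open>k \<in> shared_support\<close> \<open>l \<in> shared_support\<close> \<open>k \<noteq> l\<close>
        by (meson inj_onD)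
      ultimately show False
        using one_negative[of "e k" "e l"] by blast
    next
      case neg
      then have "w p < 0" "w q < 0"
        using lam_a_pos theta_b_pos by (simp_all add: wp wq divide_neg_pos)
      then show False
        using one_negative[of p q] p_neq_q by simp
    qed
  qed
  then show "\<forall>y\<in>adjacent_points. w y = 0"
    using wp wq we by simp
qed

lemma sum_le_prod_if_not_conical:
  assumes two_shared: "2 \<le> card shared_support"
    and not_conical: "\<not> conical_position adjacent_points"
    and coeffs_ge_one: "\<forall>k\<in>shared_support. 1 \<le> lam k \<and> 1 \<le> theta k"
  shows "lam a + theta b \<le> lam a * theta b"
proof (rule ccontr)
  assume "\<not> lam a + theta b \<le> lam a * theta b"
  then have "1 < 1 / lam a + 1 / theta b"
    using lam_a_pos theta_b_pos by (simp add: field_simps)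
  moreover have "1 / lam a + 1 / theta b \<le> lam k / lam a + theta k / theta b"
    if "k \<in> shared_support" for k
    using coeffs_ge_one that lam_a_pos theta_b_pos by (simp add: add_mono divide_right_mono)
  ultimately have "\<forall>k\<in>shared_support. 1 < lam k / lam a + theta k / theta b"
    by fastforce
  then show False
    using conical_adjacent_points two_shared not_conical by blast
qed

end

lemma gt_one_if_sum_le_mult:
  fixes x y :: real
  assumes "0 < x" "0 < y" "x + y \<le> x * y"
  shows "1 < x"
proof -
  have "y * (x - 1) = x * y - y"
    by (simp add: algebra_simps)
  then have "0 < y * (x - 1)"
    using assms by linarith
  then show ?thesis
    using \<open>0 < y\<close> by (simp add: zero_less_mult_iff)
qed

theorem proposition6p7:
  fixes e :: "nat \<Rightarrow> real ^ 'n"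
    and X :: "(real ^ 'n) set"
    and n :: nat
    and p q :: "real ^ 'n"
    and Sp Sq :: "nat set"
    and lam theta :: "nat \<Rightarrow> real"
    and a b :: nat
  assumes n_def: "n = CARD('n)"
    and n_ge: "n \<ge> 3"
    and e_inj: "inj_on e {0..n}"
    and e_simplex: "\<not> affine_dependent (e ` {0..n})"
    and e_sum: "(\<Sum>i = 0..n. e i) = 0"
    and X_fin: "finite X"
    and X_nz: "0 \<notin> X"
    and E_sub: "e ` {0..n} \<subseteq> X"
    and X_nomult: "\<And>x y c. x \<in> X \<Longrightarrow> y \<in> X \<Longrightarrow> x \<noteq> y \<Longrightarrow> 0 < c \<Longrightarrow> x \<noteq> c *\<^sub>R y"
    and X_good: "\<And>A. A \<subseteq> X \<Longrightarrow> card A = n + 1 \<Longrightarrow> good_position A"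
    and pX: "p \<in> X" and qX: "q \<in> X"
    and Sp_supp: "is_support e {0..n} Sp p"
    and Sq_supp: "is_support e {0..n} Sq q"
    and lam_pos: "\<And>i. i \<in> Sp \<Longrightarrow> 0 < lam i"
    and p_eq: "p = (\<Sum>i\<in>Sp. lam i *\<^sub>R e i)"
    and lam_norm: "Min (lam ` Sp) = 1"
    and theta_pos: "\<And>i. i \<in> Sq \<Longrightarrow> 0 < theta i"
    and q_eq: "q = (\<Sum>i\<in>Sq. theta i *\<^sub>R e i)"
    and theta_norm: "Min (theta ` Sq) = 1"
    and union: "Sp \<union> Sq = {0..n}"
    and inter: "card (Sp \<inter> Sq) = n - 1"
    and a_def: "Sp - Sq = {a}"
    and b_def: "Sq - Sp = {b}"
  shows "1 < lam a \<and> 1 < theta b \<and> lam a + theta b \<le> lam a * theta b"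
proof -
  have Sp_eq: "Sp = {0..n} - {b}" and Sq_eq: "Sq = {0..n} - {a}"
    using Sp_supp Sq_supp union a_def b_def unfolding is_support_def by auto
  have lam_ge: "1 \<le> lam i" if "i \<in> Sp" for i
    using lam_norm that Sp_eq by (metis Min_le finite_Diff finite_atLeastAtMost finite_imageI imageI)
  have theta_ge: "1 \<le> theta i" if "i \<in> Sq" for i
    using theta_norm that Sq_eq by (metis Min_le finite_Diff finite_atLeastAtMost finite_imageI imageI)
  interpret adjacent_supports e "{0..n}" a b lam theta p q
    using e_inj e_simplex e_sum a_def b_def lam_pos theta_pos p_eq q_eq Sp_eq Sq_eq
    by unfold_locales (auto simp: atLeast0AtMost)
  have shared: "shared_support = Sp \<inter> Sq"
    using Sp_eq Sq_eq by auto
  have "adjacent_points \<subseteq> X"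
    using pX qX E_sub by auto
  then have "\<not> conical_position adjacent_points"
    using X_good card_adjacent_points unfolding good_position_def by simp
  then have sum_le: "lam a + theta b \<le> lam a * theta b"
    using sum_le_prod_if_not_conical inter n_ge lam_ge theta_ge by (simp add: shared)
  then show ?thesis
    using gt_one_if_sum_le_mult[of "lam a" "theta b"] gt_one_if_sum_le_mult[of "theta b" "lam a"]
      lam_a_pos theta_b_pos by (simp add: ac_simps)
qed

end
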